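(* Let $n\geq 0$ and $k\geq 1$ be integers with $k\not\equiv 1 \pmod 3$. Then $\gcd(B_{k,n},C_{k,n})=1$.
   Context: For an integer $k\geq 1$, the generalized balancing numbers are defined by $B_{k,0}=0$, $B_{k,1}=1$ and $B_{k,n}=3kB_{k,n-1}+(1-k)B_{k,n-2}$ for $n\geq 2$; the generalized balancing-Lucas numbers are defined by $C_{k,0}=1$, $C_{k,1}=3$ and $C_{k,n}=3kC_{k,n-1}+(1-k)C_{k,n-2}$ for $n\geq 2$. *)

theory Defs
  imports Main
begin

fun genB :: "int \<Rightarrow> nat \<Rightarrow> int" where
  "genB k 0 = 0"
| "genB k (Suc 0) = 1"
| "genB k (Suc (Suc n)) = 3 * k * genB k (Suc n) + (1 - k) * genB k n"

fun genC :: "int \<Rightarrow> nat \<Rightarrow> int" where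
  "genC k 0 = 1"
| "genC k (Suc 0) = 3"
| "genC k (Suc (Suc n)) = 3 * k * genC k (Suc n) + (1 - k) * genC k n"

end

theory Submission
  imports Defs "HOL-Number_Theory.Cong"
begin

(*
  Modulo k - 1 the recurrence reads B(n+2) = 3 B(n+1), so B(n+1) is congruent to 3^n and
  hence coprime to k - 1 whenever 3 does not divide k - 1, i.e. k mod 3 is not 1.
  Consequently the recurrence B(n+2) = 3k B(n+1) + (1 - k) B(n) passes coprimality of
  consecutive terms from one pair to the next.  Finally C(n) = B(n+1) + 3(1 - k) B(n),
  so gcd (B(n), C(n)) = gcd (B(n), B(n+1)) = 1.
*)

lemma coprime_add_mult_iff:
  fixes m a b :: "'a :: semiring_gcd"
  shows "coprime m (a + b * m) \<longleftrightarrow> coprime m a"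
  by (metis add.commute coprime_iff_gcd_eq_1 gcd_add_mult)

lemma genC_eq_genB: "genC k n = genB k (Suc n) + 3 * (1 - k) * genB k n"
proof (induction k n rule: genC.induct)
  case (3 k n)
  show ?case
    unfolding genC.simps(3) 3 by (simp add: algebra_simps)
qed simp_all

lemma genB_Suc_cong_power: "[genB k (Suc n) = 3 ^ n] (mod k - 1)"
proof (induction n)
  case 0
  then show ?case by (simp add: cong_refl)
next
  case (Suc n)
  have "genB k (Suc (Suc n)) - 3 * genB k (Suc n) = (k - 1) * (3 * genB k (Suc n) - genB k n)"
    by (simp add: algebra_simps)
  then have "[genB k (Suc (Suc n)) = 3 * genB k (Suc n)] (mod k - 1)"
    by (simp add: cong_iff_dvd_diff)
  also have "[3 * genB k (Suc n) = 3 * 3 ^ n] (mod k - 1)"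
    using Suc.IH by (rule cong_scalar_left)
  finally show ?case
    by simp
qed

lemma coprime_pred_three:
  fixes k :: int
  assumes "k mod 3 \<noteq> 1"
  shows "coprime (k - 1) 3"
proof -
  define r where "r = (k - 1) mod 3"
  have "r = 1 \<or> r = 2"
    using assms unfolding r_def by presburger
  then have "gcd 3 r = 1"
    by auto
  then show ?thesis
    by (simp only: coprime_iff_gcd_eq_1 gcd_red_int[of "k - 1" 3] r_def)
qed

lemma coprime_genB_Suc_pred:
  assumes "k mod 3 \<noteq> 1"
  shows "coprime (genB k (Suc n)) (k - 1)"
proof -
  have "coprime (3 ^ n) (k - 1)"
    using coprime_pred_three[OF assms] by (simp add: coprime_commute)
  with genB_Suc_cong_power show ?thesis
    by (rule cong_imp_coprime[OF cong_sym])
qed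

lemma coprime_genB_Suc_genB:
  assumes "k mod 3 \<noteq> 1"
  shows "coprime (genB k (Suc n)) (genB k n)"
proof (induction n)
  case 0
  then show ?case by simp
next
  case (Suc n)
  have "coprime (genB k (Suc n)) (1 - k)"
    using coprime_genB_Suc_pred[OF assms, of n]
    by (metis coprime_minus_right_iff minus_diff_eq)
  with Suc.IH have "coprime (genB k (Suc n)) ((1 - k) * genB k n + 3 * k * genB k (Suc n))"
    by (simp add: coprime_add_mult_iff coprime_commute)
  then show ?case
    by (simp add: coprime_commute add.commute)
qed

theorem mainTheorem13:
  fixes k :: int and n :: nat
  assumes "k \<ge> 1" and "k mod 3 \<noteq> 1"
  shows "gcd (genB k n) (genC k n) = 1"
proof -
  have "coprime (genB k n) (genB k (Suc n))"
    using coprime_genB_Suc_genB[OF assms(2)] by (simp add: coprime_commute)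
  then have "coprime (genB k n) (genB k (Suc n) + 3 * (1 - k) * genB k n)"
    by (simp only: coprime_add_mult_iff)
  then show ?thesis
    by (simp add: genC_eq_genB coprime_iff_gcd_eq_1)
qed

end
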